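(* The real flag manifold $\mathbb F_\Theta$ of type $C_4$ with $\Theta=\{\lambda_1-\lambda_2,\lambda_3-\lambda_4\}$ does not admit $K$-invariant almost complex structures.
   Context: $\mathfrak g=\mathfrak{sp}(4,\mathbb R)$ (split real form of type $C_4$) with Iwasawa decomposition $\mathfrak g=\mathfrak k\oplus\mathfrak a\oplus\mathfrak n$, roots $\pm\lambda_i\pm\lambda_j$ ($i<j$), $\pm2\lambda_i$, simple roots $\lambda_1-\lambda_2,\lambda_2-\lambda_3,\lambda_3-\lambda_4,2\lambda_4$. For $\Theta$ a set of simple roots, $\mathfrak p_\Theta=\mathfrak a\oplus\sum_{\alpha>0}\mathfrak g_\alpha\oplus\sum_{\alpha\in\langle\Theta\rangle^-}\mathfrak g_\alpha$ where $\langle\Theta\rangle^-$ are the negative roots generated by $\Theta$; $G$ is the inner automorphism group of $\mathfrak g$, $K$ its maximal compact subgroup, $P_\Theta$ the normalizer of $\mathfrak p_\Theta$ in $G$, $K_\Theta=K\cap P_\Theta$, $\mathbb F_\Theta=G/P_\Theta=K/K_\Theta$. $K$-invariant means invariant under the left action of $K$. *)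

theory Defs
  imports "HOL-Analysis.Analysis"
begin

text \<open>Concrete model: sp(4,R) realised as 8x8 real matrices X with
  X^T Omega + Omega X = 0, Omega = [[0,I],[-I,0]].  The Cartan subspace a
  consists of diag(a1,a2,a3,a4,-a1,-a2,-a3,-a4); lambda_i(H) = a_i.\<close>

type_synonym mat8 = "real ^ 8 ^ 8"

definition Omega :: mat8 where
  "Omega = (\<chi> i j. if j = i + 4 then (if i < 4 then 1 else -1) else 0)"

definition sp_alg :: "mat8 set" where
  "sp_alg = {X. transpose X ** Omega + Omega ** X = 0}"

definition Sp_grp :: "mat8 set" where
  "Sp_grp = {g. transpose g ** Omega ** g = Omega}"

text \<open>Maximal compact subgroup Sp(8,R) \<inter> O(8) (= U(4)); its image under Ad
  is the maximal compact subgroup K of G = Int(g).\<close>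
definition K_grp :: "mat8 set" where
  "K_grp = {k \<in> Sp_grp. transpose k ** k = mat 1}"

definition Ad :: "mat8 \<Rightarrow> mat8 \<Rightarrow> mat8" where
  "Ad g X = g ** X ** matrix_inv g"

definition k_alg :: "mat8 set" where
  "k_alg = {Y \<in> sp_alg. transpose Y = - Y}"

text \<open>Characteristic element H_Theta for Theta = {lambda1-lambda2, lambda3-lambda4}:
  a = (2,2,1,1); the roots of Theta vanish, the other simple roots are positive.\<close>
definition H_Theta :: mat8 where
  "H_Theta = (\<chi> i j. if i = j then
      (if i < 2 then 2 else if i < 4 then 1 else if i < 6 then -2 else -1) else 0)"

text \<open>The flag manifold F_Theta = K/K_Theta realised as the orbit Ad(K) H_Theta
  (K_Theta = centraliser of H_Theta in K), an embedded submanifold of R^(8x8).\<close>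
definition flag_Theta :: "mat8 set" where
  "flag_Theta = {Ad k H_Theta | k. k \<in> K_grp}"

definition tangent_space :: "mat8 \<Rightarrow> mat8 set" where
  "tangent_space x = {Y ** x - x ** Y | Y. Y \<in> k_alg}"

definition almost_complex_structure ::
  "mat8 set \<Rightarrow> (mat8 \<Rightarrow> mat8 set) \<Rightarrow> (mat8 \<Rightarrow> mat8 \<Rightarrow> mat8) \<Rightarrow> bool" where
  "almost_complex_structure M T J \<longleftrightarrow>
     (\<forall>x\<in>M. linear (J x) \<and> (\<forall>v\<in>T x. J x v \<in> T x \<and> J x (J x v) = - v)) \<and>
     (\<forall>v. continuous_on M (\<lambda>x. J x v))"

text \<open>K-invariance: J commutes with the differential of the left action of K,
  which for x \<mapsto> Ad k x is v \<mapsto> Ad k v.\<close>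
definition K_invariant_acs :: "(mat8 \<Rightarrow> mat8 \<Rightarrow> mat8) \<Rightarrow> bool" where
  "K_invariant_acs J \<longleftrightarrow>
     (\<forall>k\<in>K_grp. \<forall>x\<in>flag_Theta. \<forall>v\<in>tangent_space x.
        J (Ad k x) (Ad k v) = Ad k (J x v))"

end

theory Submission
  imports Defs
begin

text \<open>At the base point \<open>H_Theta\<close>, \<open>K\<close>-invariance forces \<open>J\<close> to commute with the isotropy
  group \<open>K_Theta\<close>.  This group contains the diagonal sign changes of the coordinate pairs
  \<open>(e_m, e_(m+4))\<close> and the permutation exchanging \<open>e_1, e_2\<close> (together with \<open>e_5, e_6\<close>).
  The tangent vectors fixed by all sign changes and negated by the permutation form a single
  line, spanned by a vector \<open>v0\<close> from the root spaces of \<open>\<plusminus>2\<lambda>\<^sub>1, \<plusminus>2\<lambda>\<^sub>2\<close>.  Since \<open>J\<close> preserves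
  that line, \<open>v0\<close> would be a real eigenvector of \<open>J\<close>, contradicting \<open>J\<^sup>2 = -1\<close>.\<close>

lemma complex_structure_no_real_eigenvector:
  fixes f :: "'a::real_vector \<Rightarrow> 'a"
  assumes "linear f" and "f (f v) = - v" and "f v = c *\<^sub>R v"
  shows "v = 0"
proof -
  have "- v = (c * c) *\<^sub>R v"
    using assms by (simp add: linear_cmul)
  then have "(c * c + 1) *\<^sub>R v = 0"
    by (metis add.commute neg_eq_iff_add_eq_0 scaleR_add_left scaleR_one)
  moreover have "c * c + 1 \<noteq> 0"
    by (metis add_nonneg_pos zero_le_square zero_less_one less_irrefl)
  ultimately show ?thesis
    by simp
qed

lemma matrix_inv_eq_self:
  fixes A :: "'a::semiring_1^'n^'n"
  assumes "A ** A = mat 1"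
  shows "matrix_inv A = A"
proof -
  let ?P = "\<lambda>B. A ** B = mat 1 \<and> B ** A = mat 1"
  have inv: "?P (matrix_inv A)"
    unfolding matrix_inv_def by (rule someI[of ?P A]) (use assms in auto)
  then have "matrix_inv A = matrix_inv A ** (A ** A)"
    using assms by simp
  also have "\<dots> = A"
    by (simp add: matrix_mul_assoc inv)
  finally show ?thesis .
qed

definition monomial_mat :: "('n::finite \<Rightarrow> 'n) \<Rightarrow> ('n \<Rightarrow> 'a::semiring_1) \<Rightarrow> 'a^'n^'n" where
  "monomial_mat \<tau> c = (\<chi> i j. if j = \<tau> i then c i else 0)"

definition signed_involution :: "('n \<Rightarrow> 'n) \<Rightarrow> ('n \<Rightarrow> 'a::semiring_1) \<Rightarrow> bool" where
  "signed_involution \<tau> c \<longleftrightarrow> (\<forall>i. \<tau> (\<tau> i) = i \<and> c (\<tau> i) = c i \<and> c i * c i = 1)"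

lemma monomial_mat_entry: "monomial_mat \<tau> c $ i $ j = (if j = \<tau> i then c i else 0)"
  by (simp add: monomial_mat_def)

lemma monomial_mat_mult_left: "(monomial_mat \<tau> c ** X) $ i $ j = c i * X $ \<tau> i $ j"
  by (simp add: matrix_matrix_mult_def monomial_mat_def if_distrib[of "\<lambda>x. x * _"]
      sum.delta cong: if_cong)

lemma monomial_mat_mult_right:
  assumes "\<And>i. \<tau> (\<tau> i) = i"
  shows "(X ** monomial_mat \<tau> c) $ i $ j = X $ i $ \<tau> j * c (\<tau> j)"
proof -
  have "\<And>k. (j = \<tau> k) = (k = \<tau> j)"
    using assms by metis
  then show ?thesis
    by (simp add: matrix_matrix_mult_def monomial_mat_def if_distrib[of "\<lambda>x. _ * x"]
        sum.delta cong: if_cong)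
qed

lemma monomial_mat_mult:
  "monomial_mat \<sigma> a ** monomial_mat \<tau> b = monomial_mat (\<tau> \<circ> \<sigma>) (\<lambda>i. a i * b (\<sigma> i))"
  by (simp add: vec_eq_iff monomial_mat_mult_left monomial_mat_entry)

lemma monomial_mat_id_one: "monomial_mat id (\<lambda>_. 1) = mat 1"
  by (simp add: vec_eq_iff monomial_mat_entry mat_def)

lemma signed_involution_square:
  assumes "signed_involution \<tau> c"
  shows "monomial_mat \<tau> c ** monomial_mat \<tau> c = mat 1"
proof -
  have "\<tau> \<circ> \<tau> = id" and "(\<lambda>i. c i * c (\<tau> i)) = (\<lambda>_. 1)"
    using assms by (auto simp: signed_involution_def)
  then show ?thesis
    by (simp add: monomial_mat_mult monomial_mat_id_one)
qed

lemma signed_involution_transpose: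
  assumes "signed_involution \<tau> c"
  shows "transpose (monomial_mat \<tau> c) = monomial_mat \<tau> c"
  using assms unfolding signed_involution_def
  by (auto simp: vec_eq_iff transpose_def monomial_mat_entry)

lemma Ad_signed_involution:
  assumes "signed_involution \<tau> c"
  shows "Ad (monomial_mat \<tau> c) X $ i $ j = c i * X $ \<tau> i $ \<tau> j * c j"
  using assms unfolding Ad_def matrix_inv_eq_self[OF signed_involution_square[OF assms]]
  by (simp add: monomial_mat_mult_right monomial_mat_mult_left signed_involution_def)

lemma commutator_diagonal_entry:
  fixes Y :: "'a::comm_ring_1^'n^'n"
  shows "(Y ** monomial_mat id d - monomial_mat id d ** Y) $ i $ j = Y $ i $ j * (d j - d i)"
  by (simp add: monomial_mat_mult_right monomial_mat_mult_left algebra_simps)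

lemma commutator_diagonal_symmetric:
  fixes Y :: "'a::comm_ring_1^'n^'n"
  assumes "transpose Y = - Y"
  shows "(Y ** monomial_mat id d - monomial_mat id d ** Y) $ j $ i
       = (Y ** monomial_mat id d - monomial_mat id d ** Y) $ i $ j"
proof -
  have "Y $ j $ i = - Y $ i $ j"
    using arg_cong[OF assms, of "\<lambda>M. M $ i $ j"] by (simp add: transpose_def)
  then show ?thesis
    unfolding commutator_diagonal_entry by (simp add: algebra_simps)
qed

subsection \<open>The isotropy of \<open>H_Theta\<close>\<close>

lemma exhaust_8:
  fixes x :: 8
  shows "x = 0 \<or> x = 1 \<or> x = 2 \<or> x = 3 \<or> x = 4 \<or> x = 5 \<or> x = 6 \<or> x = 7"
proof (induct x)
  case (of_int z)
  then have "z = 0 \<or> z = 1 \<or> z = 2 \<or> z = 3 \<or> z = 4 \<or> z = 5 \<or> z = 6 \<or> z = 7"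
    by fastforce
  then show ?case
    by auto
qed

lemma forall_8: "(\<forall>i::8. P i) \<longleftrightarrow> P 0 \<and> P 1 \<and> P 2 \<and> P 3 \<and> P 4 \<and> P 5 \<and> P 6 \<and> P 7"
  by (metis exhaust_8)

lemma numeral_8_wrap: "(8::8) = 0" "(9::8) = 1" "(10::8) = 2" "(11::8) = 3"
  by simp_all

lemmas numeral_8_less = less_bit0_def bit0.Rep_numeral bit0.Rep_0 bit0.Rep_1

definition H_diag :: "8 \<Rightarrow> real" where
  "H_diag i = (if i < 2 then 2 else if i < 4 then 1 else if i < 6 then -2 else -1)"

lemma H_Theta_monomial: "H_Theta = monomial_mat id H_diag"
  unfolding H_Theta_def monomial_mat_def H_diag_def by (simp add: vec_eq_iff)

lemma Omega_monomial: "Omega = monomial_mat (\<lambda>i. i + 4) (\<lambda>i. if i < 4 then 1 else -1)"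
  unfolding Omega_def monomial_mat_def ..

lemma signed_involution_in_K_grp:
  fixes c :: "8 \<Rightarrow> real"
  assumes inv: "signed_involution \<tau> c"
    and "\<And>i. \<tau> (i + 4) = \<tau> i + 4" and "\<And>i. \<tau> i < 4 \<longleftrightarrow> i < 4" and "\<And>i. c (i + 4) = c i"
  shows "monomial_mat \<tau> c \<in> K_grp"
proof -
  have "\<tau> \<circ> (\<lambda>i. i + 4) \<circ> \<tau> = (\<lambda>i. i + 4)"
    using assms by (auto simp: signed_involution_def)
  moreover have "c i * (if \<tau> i < 4 then 1 else -1) * c (\<tau> i + 4) = (if i < 4 then 1 else -1)" for i
    using assms by (auto simp: signed_involution_def)
  ultimately have "monomial_mat \<tau> c ** Omega ** monomial_mat \<tau> c = Omega"
    unfolding Omega_monomial monomial_mat_mult by (simp add: comp_def)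
  then show ?thesis
    unfolding K_grp_def Sp_grp_def
    by (simp add: signed_involution_transpose signed_involution_square inv)
qed

lemma Ad_signed_involution_diagonal:
  assumes "signed_involution \<tau> c" and "\<And>i. d (\<tau> i) = d i"
  shows "Ad (monomial_mat \<tau> c) (monomial_mat id d) = monomial_mat id d"
proof -
  have "\<And>i j. \<tau> j = \<tau> i \<longleftrightarrow> j = i"
    using assms(1) unfolding signed_involution_def by metis
  then show ?thesis
    using assms
    by (auto simp: vec_eq_iff Ad_signed_involution monomial_mat_entry signed_involution_def)
qed

text \<open>Coordinates are indexed \<open>0..7\<close>, and \<open>m + 4\<close> is taken mod 8.\<close>
definition flip_sign :: "8 \<Rightarrow> 8 \<Rightarrow> real" where
  "flip_sign m i = (if i = m \<or> i = m + 4 then -1 else 1)"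

definition sign_flip :: "8 \<Rightarrow> mat8" where
  "sign_flip m = monomial_mat id (flip_sign m)"

definition swap_01_perm :: "8 \<Rightarrow> 8" where
  "swap_01_perm i =
    (if i = 0 then 1 else if i = 1 then 0 else if i = 4 then 5 else if i = 5 then 4 else i)"

definition swap_01 :: mat8 where
  "swap_01 = monomial_mat swap_01_perm (\<lambda>_. 1)"

lemma signed_involution_flip_sign: "signed_involution id (flip_sign m)"
  by (simp add: signed_involution_def flip_sign_def)

lemma signed_involution_swap_01: "signed_involution swap_01_perm (\<lambda>_. 1::real)"
  unfolding signed_involution_def
  using exhaust_8 by (auto simp: swap_01_perm_def)

lemma flip_sign_plus_4: "flip_sign m (i + 4) = flip_sign m i"
  using exhaust_8[of i] exhaust_8[of m] by (auto simp: flip_sign_def)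

lemma H_diag_swap_01_perm: "H_diag (swap_01_perm i) = H_diag i"
  using exhaust_8[of i] by (auto simp: swap_01_perm_def H_diag_def numeral_8_less)

lemma sign_flip_in_K_grp: "sign_flip m \<in> K_grp"
  unfolding sign_flip_def
  by (intro signed_involution_in_K_grp signed_involution_flip_sign) (auto simp: flip_sign_plus_4)

lemma swap_01_in_K_grp: "swap_01 \<in> K_grp"
  unfolding swap_01_def
proof (intro signed_involution_in_K_grp signed_involution_swap_01)
  show "swap_01_perm (i + 4) = swap_01_perm i + 4" and "swap_01_perm i < 4 \<longleftrightarrow> i < 4" for i
    using exhaust_8[of i] by (auto simp: swap_01_perm_def numeral_8_less)
qed simp

lemma Ad_sign_flip_H_Theta: "Ad (sign_flip m) H_Theta = H_Theta"
  unfolding sign_flip_def H_Theta_monomial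
  by (rule Ad_signed_involution_diagonal[OF signed_involution_flip_sign]) simp

lemma Ad_swap_01_H_Theta: "Ad swap_01 H_Theta = H_Theta"
  unfolding swap_01_def H_Theta_monomial
  by (rule Ad_signed_involution_diagonal[OF signed_involution_swap_01])
    (rule H_diag_swap_01_perm)

subsection \<open>The isotropy-invariant tangent line at \<open>H_Theta\<close>\<close>

definition Y0 :: mat8 where
  "Y0 = (\<chi> i j. if (i = 4 \<and> j = 0) \<or> (i = 1 \<and> j = 5) then 1
        else if (i = 0 \<and> j = 4) \<or> (i = 5 \<and> j = 1) then -1 else 0)"

definition v0 :: mat8 where
  "v0 = Y0 ** H_Theta - H_Theta ** Y0"

lemma Y0_in_k_alg: "Y0 \<in> k_alg"
proof -
  have skew: "transpose Y0 = - Y0"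
    by (auto simp: vec_eq_iff transpose_def Y0_def)
  have "transpose Y0 ** Omega + Omega ** Y0 = 0"
    unfolding Omega_monomial skew
    by (simp add: vec_eq_iff monomial_mat_mult_left monomial_mat_mult_right forall_8 Y0_def
        numeral_8_less)
  with skew show ?thesis
    unfolding k_alg_def sp_alg_def by simp
qed

lemma v0_in_tangent_space: "v0 \<in> tangent_space H_Theta"
  unfolding tangent_space_def v0_def using Y0_in_k_alg by blast

lemma v0_entry: "v0 $ i $ j = Y0 $ i $ j * (H_diag j - H_diag i)"
  unfolding v0_def H_Theta_monomial commutator_diagonal_entry ..

lemma v0_nonzero: "v0 \<noteq> 0"
proof -
  have "v0 $ 0 $ 4 = 4"
    by (simp add: v0_entry Y0_def H_diag_def numeral_8_less)
  then show ?thesis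
    by auto
qed

lemma Y0_support: "Y0 $ i $ j \<noteq> 0 \<Longrightarrow> j = i + 4"
  by (auto simp: Y0_def split: if_splits)

lemma Ad_sign_flip_v0: "Ad (sign_flip m) v0 = v0"
proof -
  have "flip_sign m i * v0 $ i $ j * flip_sign m j = v0 $ i $ j" for i j
    using Y0_support[of i j] flip_sign_plus_4[of m i]
    by (cases "Y0 $ i $ j = 0") (auto simp: v0_entry flip_sign_def)
  then show ?thesis
    unfolding sign_flip_def
    by (simp add: vec_eq_iff Ad_signed_involution[OF signed_involution_flip_sign])
qed

lemma Ad_swap_01_v0: "Ad swap_01 v0 = - v0"
proof -
  have "Y0 $ swap_01_perm i $ swap_01_perm j = - Y0 $ i $ j" for i j
    using exhaust_8[of i] exhaust_8[of j] by (auto simp: swap_01_perm_def Y0_def)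
  then show ?thesis
    unfolding swap_01_def
    by (simp add: vec_eq_iff Ad_signed_involution[OF signed_involution_swap_01] v0_entry
        H_diag_swap_01_perm)
qed

lemma isotropy_fixed_tangent_line:
  assumes "w \<in> tangent_space H_Theta"
    and flip: "\<And>m. Ad (sign_flip m) w = w" and swap: "Ad swap_01 w = - w"
  shows "w = (w $ 0 $ 4 / 4) *\<^sub>R v0"
proof -
  obtain Y where skew: "transpose Y = - Y" and w: "w = Y ** H_Theta - H_Theta ** Y"
    using assms(1) unfolding tangent_space_def k_alg_def by blast
  have sym: "w $ j $ i = w $ i $ j" for i j
    unfolding w H_Theta_monomial by (rule commutator_diagonal_symmetric[OF skew])
  have support: "w $ i $ j = 0" if "j \<noteq> i + 4" for i j
  proof (cases "j = i")
    case True
    then show ?thesis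
      unfolding w H_Theta_monomial commutator_diagonal_entry by simp
  next
    case False
    have "flip_sign i i * w $ i $ j * flip_sign i j = w $ i $ j"
      using arg_cong[OF flip[of i], of "\<lambda>M. M $ i $ j"]
      by (simp add: sign_flip_def Ad_signed_involution[OF signed_involution_flip_sign])
    with False that show ?thesis
      by (simp add: flip_sign_def)
  qed
  have swap_neg: "w $ swap_01_perm i $ swap_01_perm j = - w $ i $ j" for i j
    using arg_cong[OF swap, of "\<lambda>M. M $ i $ j"]
    by (simp add: swap_01_def Ad_signed_involution[OF signed_involution_swap_01])
  have "w $ 4 $ 0 = w $ 0 $ 4" "w $ 1 $ 5 = - w $ 0 $ 4" "w $ 5 $ 1 = - w $ 0 $ 4"
    "w $ 2 $ 6 = 0" "w $ 6 $ 2 = 0" "w $ 3 $ 7 = 0" "w $ 7 $ 3 = 0"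
    using sym swap_neg[of 0 4] swap_neg[of 2 6] swap_neg[of 3 7]
    by (simp_all add: swap_01_perm_def)
  then have pairs: "w $ i $ (i + 4) = (w $ 0 $ 4 / 4) * v0 $ i $ (i + 4)" for i
    using exhaust_8[of i]
    by (auto simp: v0_entry Y0_def H_diag_def numeral_8_less numeral_8_wrap)
  have "w $ i $ j = (w $ 0 $ 4 / 4) * v0 $ i $ j" for i j
  proof (cases "j = i + 4")
    case True
    then show ?thesis
      using pairs by simp
  next
    case False
    then show ?thesis
      using support[OF False] Y0_support[of i j] by (auto simp: v0_entry)
  qed
  then show ?thesis
    by (simp add: vec_eq_iff)
qed

lemma H_Theta_in_flag_Theta: "H_Theta \<in> flag_Theta"
proof -
  have "mat 1 \<in> K_grp"
    by (simp add: K_grp_def Sp_grp_def)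
  moreover have "Ad (mat 1) H_Theta = H_Theta"
    by (simp add: Ad_def matrix_inv_eq_self)
  ultimately show ?thesis
    unfolding flag_Theta_def by force
qed

lemma K_invariant_acs_isotropy:
  assumes "K_invariant_acs J" and "k \<in> K_grp" and "Ad k H_Theta = H_Theta"
    and "v \<in> tangent_space H_Theta"
  shows "J H_Theta (Ad k v) = Ad k (J H_Theta v)"
  using assms H_Theta_in_flag_Theta unfolding K_invariant_acs_def by metis

theorem proposition6:
  shows "\<not> (\<exists>J. almost_complex_structure flag_Theta tangent_space J \<and> K_invariant_acs J)"
proof
  assume "\<exists>J. almost_complex_structure flag_Theta tangent_space J \<and> K_invariant_acs J"
  then obtain J where acs: "almost_complex_structure flag_Theta tangent_space J"
    and inv: "K_invariant_acs J" by blast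
  let ?J = "J H_Theta"
  have lin: "linear ?J" and Jv0: "?J v0 \<in> tangent_space H_Theta" and JJ: "?J (?J v0) = - v0"
    using acs H_Theta_in_flag_Theta v0_in_tangent_space
    unfolding almost_complex_structure_def by auto
  have "Ad (sign_flip m) (?J v0) = ?J v0" for m
    using K_invariant_acs_isotropy[OF inv sign_flip_in_K_grp Ad_sign_flip_H_Theta
        v0_in_tangent_space]
    by (simp add: Ad_sign_flip_v0)
  moreover have "Ad swap_01 (?J v0) = - ?J v0"
    using K_invariant_acs_isotropy[OF inv swap_01_in_K_grp Ad_swap_01_H_Theta v0_in_tangent_space]
    by (simp add: Ad_swap_01_v0 linear_neg[OF lin])
  ultimately have "?J v0 = (?J v0 $ 0 $ 4 / 4) *\<^sub>R v0"
    using isotropy_fixed_tangent_line Jv0 by blast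
  then have "v0 = 0"
    using complex_structure_no_real_eigenvector[OF lin JJ] by blast
  with v0_nonzero show False ..
qed

end
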